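(* Let $K$ be a valued field and $d\ge 1$. Then the family $\operatorname{Conv}_{K^d}$ of convex subsets of $K^d$ has breadth exactly $d$: whenever $C_1,\dots,C_n\subseteq K^d$ are convex with $\bigcap_{i=1}^nC_i\ne\emptyset$, there is $S\subseteq\{1,\dots,n\}$ with $|S|\le d$ and $\bigcap_{i\in S}C_i=\bigcap_{i=1}^nC_i$; and $d$ is the least number with this property.
   Context: $K$ is a field with valuation $\nu$ and valuation ring $\mathcal{O}=\{x:\nu(x)\ge0\}$. A set $X\subseteq K^d$ is convex if it is closed under combinations $\sum_{i=1}^n\alpha_ix_i$ with $x_i\in X$, $\alpha_i\in\mathcal{O}$, $\sum\alpha_i=1$. A family $\mathcal{F}$ of subsets of a set has breadth $d$ if every nonempty intersection of finitely many members of $\mathcal{F}$ equals the intersection of at most $d$ of them, and $d$ is minimal with this property. *)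

theory Defs
  imports "HOL-Analysis.Analysis"
begin

text \<open>The value of 0 is +infinity; this is encoded by only constraining v on nonzero
  elements and treating 0 separately in the valuation ring.\<close>
definition valuation :: "('k::field \<Rightarrow> 'g::linordered_ab_group_add) \<Rightarrow> bool" where
  "valuation v \<longleftrightarrow>
     (\<forall>x y. x \<noteq> 0 \<and> y \<noteq> 0 \<longrightarrow> v (x * y) = v x + v y) \<and>
     (\<forall>x y. x \<noteq> 0 \<and> y \<noteq> 0 \<and> x + y \<noteq> 0 \<longrightarrow> min (v x) (v y) \<le> v (x + y))"

definition val_ring :: "('k::field \<Rightarrow> 'g::linordered_ab_group_add) \<Rightarrow> 'k set" where
  "val_ring v = {x. x = 0 \<or> 0 \<le> v x}"

definition val_convex :: "('k::field \<Rightarrow> 'g::linordered_ab_group_add) \<Rightarrow> ('k ^ 'n) set \<Rightarrow> bool" where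
  "val_convex v X \<longleftrightarrow>
     (\<forall>(m::nat) (\<alpha>::nat \<Rightarrow> 'k) (x::nat \<Rightarrow> 'k ^ 'n).
        (\<forall>i<m. x i \<in> X \<and> \<alpha> i \<in> val_ring v) \<and> (\<Sum>i<m. \<alpha> i) = 1
        \<longrightarrow> (\<Sum>i<m. \<alpha> i *s x i) \<in> X)"

definition breadth_le :: "'a set set \<Rightarrow> nat \<Rightarrow> bool" where
  "breadth_le F d \<longleftrightarrow>
     (\<forall>(n::nat) (C::nat \<Rightarrow> 'a set). (\<forall>i<n. C i \<in> F) \<and> (\<Inter>i<n. C i) \<noteq> {} \<longrightarrow>
        (\<exists>S\<subseteq>{..<n}. card S \<le> d \<and> (\<Inter>i\<in>S. C i) = (\<Inter>i<n. C i)))"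

definition has_breadth :: "'a set set \<Rightarrow> nat \<Rightarrow> bool" where
  "has_breadth F d \<longleftrightarrow> breadth_le F d \<and> (\<forall>e<d. \<not> breadth_le F e)"

end

theory Submission
  imports Defs
begin

text \<open>Upper bound: let \<open>C\<^sub>0, \<dots>, C\<^sub>d\<close> be convex sets through a common point \<open>p\<close>, and suppose
  none of them contains the intersection of the others, say \<open>x\<^sub>j\<close> lies in all of them except
  \<open>C\<^sub>j\<close>. The \<open>d + 1\<close> vectors \<open>x\<^sub>j - p\<close> are linearly dependent in \<open>K\<^sup>d\<close>; dividing a dependence
  relation by the coefficient of minimal value writes one \<open>x\<^sub>j - p\<close> as an \<open>\<O>\<close>-combination of
  the others. A convex set through \<open>p\<close> is closed under such combinations around \<open>p\<close>, so
  \<open>x\<^sub>j \<in> C\<^sub>j\<close> after all. Hence among more than \<open>d\<close> sets one is always redundant.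
  Lower bound: the \<open>d\<close> coordinate hyperplanes are convex and none of them is redundant.\<close>

lemma valuation_mult: "valuation v \<Longrightarrow> x \<noteq> 0 \<Longrightarrow> y \<noteq> 0 \<Longrightarrow> v (x * y) = v x + v y"
  unfolding valuation_def by blast

lemma valuation_one: "valuation v \<Longrightarrow> v 1 = 0"
  using valuation_mult[of v 1 1] by simp

lemma valuation_minus_one:
  fixes v :: "'k::field \<Rightarrow> 'g::linordered_ab_group_add"
  assumes "valuation v"
  shows "v (-1) = 0"
proof -
  have "v (-1) + v (-1) = 0"
    using valuation_mult[OF assms, of "-1" "-1"] valuation_one[OF assms] by simp
  then show ?thesis
    by (metis add_neg_neg add_pos_pos less_irrefl linorder_neqE)
qed

lemma valuation_uminus: "valuation v \<Longrightarrow> x \<noteq> 0 \<Longrightarrow> v (- x) = v x"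
  using valuation_mult[of v "-1" x] valuation_minus_one[of v] by simp

lemma val_ring_one: "valuation v \<Longrightarrow> 1 \<in> val_ring v"
  by (simp add: val_ring_def valuation_one)

lemma val_ring_uminus: "valuation v \<Longrightarrow> a \<in> val_ring v \<Longrightarrow> - a \<in> val_ring v"
  by (cases "a = 0") (auto simp: val_ring_def valuation_uminus)

lemma val_ring_add:
  assumes "valuation v" "a \<in> val_ring v" "b \<in> val_ring v"
  shows "a + b \<in> val_ring v"
proof (cases "a = 0 \<or> b = 0 \<or> a + b = 0")
  case True
  then show ?thesis using assms by (auto simp: val_ring_def)
next
  case False
  then have "min (v a) (v b) \<le> v (a + b)" and "0 \<le> min (v a) (v b)"
    using assms by (auto simp: valuation_def val_ring_def)
  then have "0 \<le> v (a + b)" by (rule order_trans[rotated])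
  then show ?thesis by (simp add: val_ring_def)
qed

lemma val_ring_diff:
  "valuation v \<Longrightarrow> a \<in> val_ring v \<Longrightarrow> b \<in> val_ring v \<Longrightarrow> a - b \<in> val_ring v"
  using val_ring_add[of v a "- b"] val_ring_uminus[of v b] by simp

lemma val_ring_divide:
  assumes "valuation v" "c \<noteq> 0" "v c \<le> v b"
  shows "b / c \<in> val_ring v"
proof (cases "b = 0")
  case False
  then have "v b = v (b / c) + v c"
    using valuation_mult[OF assms(1), of "b / c" c] assms(2) by simp
  then show ?thesis using assms(3) by (simp add: val_ring_def)
qed (simp add: val_ring_def)

lemma val_convex_two_points:
  assumes "valuation v" "val_convex v X" "p \<in> X" "q \<in> X" "a \<in> val_ring v"
  shows "(1 - a) *s p + a *s q \<in> X"
proof -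
  let ?\<alpha> = "\<lambda>i::nat. if i = 0 then 1 - a else a"
  let ?x = "\<lambda>i::nat. if i = 0 then p else q"
  have "1 - a \<in> val_ring v"
    using val_ring_diff[OF assms(1) val_ring_one[OF assms(1)] assms(5)] .
  then have "(\<Sum>i<Suc (Suc 0). ?\<alpha> i *s ?x i) \<in> X"
    using assms
    by (intro assms(2)[unfolded val_convex_def, rule_format]) (auto simp: lessThan_Suc less_Suc_eq)
  then show ?thesis by (simp add: lessThan_Suc add.commute)
qed

lemma val_convex_parallelogram:
  assumes "valuation v" "val_convex v X" "p \<in> X" "q \<in> X" "r \<in> X"
  shows "q + r - p \<in> X"
proof -
  let ?\<alpha> = "\<lambda>i::nat. if i = 0 then -1 else 1"
  let ?x = "\<lambda>i::nat. if i = 0 then p else if i = 1 then q else r"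
  have "-1 \<in> val_ring v"
    using val_ring_uminus[OF assms(1) val_ring_one[OF assms(1)]] .
  then have "(\<Sum>i<Suc (Suc (Suc 0)). ?\<alpha> i *s ?x i) \<in> X"
    using assms val_ring_one
    by (intro assms(2)[unfolded val_convex_def, rule_format]) (auto simp: lessThan_Suc less_Suc_eq)
  then show ?thesis by (simp add: lessThan_Suc algebra_simps)
qed

text \<open>The coefficients need not sum to \<open>1\<close>: the missing weight is put on \<open>p\<close>.\<close>

lemma val_convex_translate_module:
  assumes "valuation v" "val_convex v X" "p \<in> X" "finite T"
    and "\<forall>u\<in>T. p + u \<in> X" "\<forall>u\<in>T. a u \<in> val_ring v"
  shows "p + (\<Sum>u\<in>T. a u *s u) \<in> X"
  using assms(4-6)
proof (induction T rule: finite_induct)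
  case empty
  then show ?case using assms(3) by simp
next
  case (insert u T)
  have sum_T: "p + (\<Sum>u\<in>T. a u *s u) \<in> X" using insert by auto
  have "(1 - a u) *s p + a u *s (p + u) \<in> X"
    using val_convex_two_points[OF assms(1-3)] insert by blast
  then have "p + a u *s u \<in> X" by (simp add: algebra_simps)
  then have "(p + a u *s u) + (p + (\<Sum>u\<in>T. a u *s u)) - p \<in> X"
    using val_convex_parallelogram[OF assms(1-3) _ sum_T] by blast
  then show ?case using insert(1,2) by (simp add: algebra_simps)
qed

lemma dependent_val_ring_combination:
  fixes T :: "('k::field ^ 'n) set" and v :: "'k \<Rightarrow> 'g::linordered_ab_group_add"
  assumes "valuation v" "finite T" "vec.dependent T"
  obtains w a where "w \<in> T" "\<forall>u\<in>T - {w}. a u \<in> val_ring v" "w = (\<Sum>u\<in>T - {w}. a u *s u)"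
proof -
  obtain c where c0: "(\<Sum>u\<in>T. c u *s u) = 0" and "\<exists>u\<in>T. c u \<noteq> 0"
    using assms(2,3) vec.independent_explicit by blast
  define N where "N = {u\<in>T. c u \<noteq> 0}"
  have "finite N" "N \<noteq> {}"
    using assms(2) \<open>\<exists>u\<in>T. c u \<noteq> 0\<close> by (auto simp: N_def)
  then have "(MIN u\<in>N. v (c u)) \<in> (\<lambda>u. v (c u)) ` N"
    by (intro Min_in) auto
  then obtain w where "w \<in> N" and w_is_min: "v (c w) = (MIN u\<in>N. v (c u))"
    by (metis imageE)
  have w_min: "v (c w) \<le> v (c u)" if "u \<in> N" for u
    using \<open>finite N\<close> that unfolding w_is_min by simp
  have "w \<in> T" "c w \<noteq> 0" using \<open>w \<in> N\<close> by (auto simp: N_def)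
  define a where "a u = - (c u / c w)" for u
  have "c w *s w + (\<Sum>u\<in>T - {w}. c u *s u) = 0"
    using c0 sum.remove[OF assms(2) \<open>w \<in> T\<close>, of "\<lambda>u. c u *s u"] by simp
  then have "c w *s w = - (\<Sum>u\<in>T - {w}. c u *s u)"
    by (simp add: eq_neg_iff_add_eq_0)
  then have "inverse (c w) *s (c w *s w) = inverse (c w) *s - (\<Sum>u\<in>T - {w}. c u *s u)"
    by simp
  then have "w = (\<Sum>u\<in>T - {w}. a u *s u)"
    using \<open>c w \<noteq> 0\<close>
    by (simp add: vector_smult_assoc vec.scale_sum_right a_def divide_inverse mult.commute
        flip: sum_negf)
  moreover have "\<forall>u\<in>T - {w}. a u \<in> val_ring v"
  proof
    fix u assume "u \<in> T - {w}"
    show "a u \<in> val_ring v"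
    proof (cases "c u = 0")
      case False
      with \<open>u \<in> T - {w}\<close> have "u \<in> N" by (simp add: N_def)
      then have "c u / c w \<in> val_ring v"
        using val_ring_divide[OF assms(1) \<open>c w \<noteq> 0\<close> w_min] by blast
      then show ?thesis unfolding a_def by (rule val_ring_uminus[OF assms(1)])
    qed (simp add: a_def val_ring_def)
  qed
  ultimately show thesis using that \<open>w \<in> T\<close> by blast
qed

lemma val_convex_redundant_member:
  fixes C :: "'i \<Rightarrow> ('k::field ^ 'n) set" and v :: "'k \<Rightarrow> 'g::linordered_ab_group_add"
  assumes "valuation v" "finite J" "CARD('n) < card J"
    and "\<forall>j\<in>J. val_convex v (C j)" "\<forall>j\<in>J. p \<in> C j"
  shows "\<exists>j\<in>J. (\<Inter>i\<in>J - {j}. C i) \<subseteq> C j"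
proof (rule ccontr)
  assume "\<not> ?thesis"
  then have "\<forall>j\<in>J. \<exists>x. x \<in> (\<Inter>i\<in>J - {j}. C i) \<and> x \<notin> C j" by blast
  then obtain x where x: "\<And>j. j \<in> J \<Longrightarrow> x j \<in> (\<Inter>i\<in>J - {j}. C i) \<and> x j \<notin> C j"
    by metis
  then have x_others: "x j \<in> C i" if "i \<in> J" "j \<in> J" "i \<noteq> j" for i j
    using that by blast
  have x_own: "x j \<notin> C j" if "j \<in> J" for j
    using x that by blast
  define y where "y j = x j - p" for j
  have "inj_on y J"
  proof (rule inj_onI)
    fix i j assume "i \<in> J" "j \<in> J" "y i = y j"
    then have "x i = x j" by (simp add: y_def)
    then show "i = j" using x_others x_own \<open>i \<in> J\<close> \<open>j \<in> J\<close> by metis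
  qed
  have "vec.dependent (y ` J)"
  proof (rule ccontr)
    assume "\<not> vec.dependent (y ` J)"
    then have "card (y ` J) \<le> vec.dim (UNIV :: ('k ^ 'n) set)"
      by (intro vec.independent_card_le_dim) auto
    also have "\<dots> = CARD('n)" by (rule vec_dim_card)
    finally show False using assms(3) card_image[OF \<open>inj_on y J\<close>] by simp
  qed
  then obtain w a where "w \<in> y ` J" and a: "\<forall>u\<in>y ` J - {w}. a u \<in> val_ring v"
    and w: "w = (\<Sum>u\<in>y ` J - {w}. a u *s u)"
    using dependent_val_ring_combination[OF assms(1)] assms(2) by blast
  then obtain j where "j \<in> J" "w = y j" by blast
  have "\<forall>u\<in>y ` J - {w}. p + u \<in> C j"
  proof
    fix u assume "u \<in> y ` J - {w}"
    then obtain i where "i \<in> J" "i \<noteq> j" "u = y i" using \<open>w = y j\<close> by auto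
    then show "p + u \<in> C j" using x_others \<open>j \<in> J\<close> by (simp add: y_def)
  qed
  then have "p + w \<in> C j"
    using val_convex_translate_module[OF assms(1) _ _ _ _ a] assms \<open>j \<in> J\<close> w by simp
  then show False using x_own[OF \<open>j \<in> J\<close>] \<open>w = y j\<close> by (simp add: y_def)
qed

lemma val_convex_Inter_subfamily:
  fixes C :: "'i \<Rightarrow> ('k::field ^ 'n) set" and v :: "'k \<Rightarrow> 'g::linordered_ab_group_add"
  assumes "valuation v" "finite I" "\<forall>i\<in>I. val_convex v (C i)" "(\<Inter>i\<in>I. C i) \<noteq> {}"
  shows "\<exists>S\<subseteq>I. card S \<le> CARD('n) \<and> (\<Inter>i\<in>S. C i) = (\<Inter>i\<in>I. C i)"
  using assms(2-4)
proof (induction "card I" arbitrary: I rule: less_induct)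
  case less
  show ?case
  proof (cases "card I \<le> CARD('n)")
    case False
    then obtain J where "J \<subseteq> I" "card J = Suc CARD('n)" "finite J"
      using obtain_subset_with_card_n[of "Suc CARD('n)" I] by force
    moreover obtain p where "p \<in> (\<Inter>i\<in>I. C i)" using less.prems(3) by auto
    ultimately have "\<exists>j\<in>J. (\<Inter>i\<in>J - {j}. C i) \<subseteq> C j"
      using less.prems by (intro val_convex_redundant_member[OF assms(1)]) auto
    then obtain j where "j \<in> J" and j_redundant: "(\<Inter>i\<in>J - {j}. C i) \<subseteq> C j" ..
    with \<open>J \<subseteq> I\<close> have "j \<in> I" by blast
    have "(\<Inter>i\<in>I - {j}. C i) \<subseteq> (\<Inter>i\<in>J - {j}. C i)"
      using \<open>J \<subseteq> I\<close> by (intro INT_anti_mono) auto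
    with j_redundant have "(\<Inter>i\<in>I - {j}. C i) \<subseteq> C j" by (rule order_trans[rotated])
    moreover have "(\<Inter>i\<in>I. C i) = C j \<inter> (\<Inter>i\<in>I - {j}. C i)"
      by (metis INT_insert insert_Diff \<open>j \<in> I\<close>)
    ultimately have drop_j: "(\<Inter>i\<in>I - {j}. C i) = (\<Inter>i\<in>I. C i)" by blast
    have "card (I - {j}) < card I"
      using \<open>j \<in> I\<close> less.prems(1) by (rule card_Diff1_less[rotated])
    moreover have "finite (I - {j})" "\<forall>i\<in>I - {j}. val_convex v (C i)"
      "(\<Inter>i\<in>I - {j}. C i) \<noteq> {}"
      using less.prems drop_j by auto
    ultimately have "\<exists>S\<subseteq>I - {j}. card S \<le> CARD('n) \<and> (\<Inter>i\<in>S. C i) = (\<Inter>i\<in>I - {j}. C i)"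
      by (rule less.hyps)
    then obtain S where "S \<subseteq> I - {j}" "card S \<le> CARD('n)"
      "(\<Inter>i\<in>S. C i) = (\<Inter>i\<in>I. C i)"
      unfolding drop_j by blast
    then show ?thesis by (intro exI[of _ S]) auto
  qed blast
qed

lemma breadth_le_val_convex:
  "valuation v \<Longrightarrow> breadth_le {X :: ('k::field ^ 'n) set. val_convex v X} CARD('n)"
  unfolding breadth_le_def
  using val_convex_Inter_subfamily[of v "{..<_}"] by blast

lemma not_breadth_le_if_irredundant:
  assumes "\<forall>i<n. C i \<in> F" "(\<Inter>i<n. C i) \<noteq> {}"
    and "\<forall>k<n. \<not> (\<Inter>i\<in>{..<n} - {k}. C i) \<subseteq> C k" "e < n"
  shows "\<not> breadth_le F e"
proof
  assume "breadth_le F e"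
  then obtain S where "S \<subseteq> {..<n}" "card S \<le> e" and S: "(\<Inter>i\<in>S. C i) = (\<Inter>i<n. C i)"
    using assms(1,2) unfolding breadth_le_def by meson
  then have "S \<noteq> {..<n}" using assms(4) by auto
  with \<open>S \<subseteq> {..<n}\<close> obtain k where "k < n" "k \<notin> S" by blast
  then have "(\<Inter>i\<in>{..<n} - {k}. C i) \<subseteq> (\<Inter>i\<in>S. C i)"
    using \<open>S \<subseteq> {..<n}\<close> by (intro INT_anti_mono) auto
  also have "\<dots> \<subseteq> C k" unfolding S using \<open>k < n\<close> by blast
  finally show False using assms(3) \<open>k < n\<close> by blast
qed

lemma val_convex_subspace: "vec.subspace X \<Longrightarrow> val_convex v X"
  unfolding val_convex_def by (auto intro: vec.subspace_sum vec.subspace_scale)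

lemma not_breadth_le_val_convex:
  fixes v :: "'k::field \<Rightarrow> 'g::linordered_ab_group_add"
  assumes "e < CARD('n)"
  shows "\<not> breadth_le {X :: ('k ^ 'n) set. val_convex v X} e"
proof -
  obtain h :: "nat \<Rightarrow> 'n" where h: "bij_betw h {..<CARD('n)} UNIV"
    using ex_bij_betw_nat_finite[of "UNIV :: 'n set"] by (auto simp: atLeast0LessThan)
  define C where "C i = {x :: 'k ^ 'n. x $ h i = 0}" for i
  have "vec.subspace (C i)" for i
    by (auto simp: C_def vec.subspace_def)
  moreover have "0 \<in> (\<Inter>i<CARD('n). C i)" by (simp add: C_def)
  moreover have "axis (h k) 1 \<in> (\<Inter>i\<in>{..<CARD('n)} - {k}. C i) - C k" if "k < CARD('n)" for k
    using that bij_betw_imp_inj_on[OF h] by (auto simp: C_def axis_def dest: inj_onD)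
  then have "\<forall>k<CARD('n). \<not> (\<Inter>i\<in>{..<CARD('n)} - {k}. C i) \<subseteq> C k"
    by blast
  ultimately show ?thesis
    by (intro not_breadth_le_if_irredundant[OF _ _ _ assms, of C]) (auto intro: val_convex_subspace)
qed

theorem theorem4p3:
  fixes v :: "'k::field \<Rightarrow> 'g::linordered_ab_group_add"
  assumes "valuation v"
  shows "has_breadth {X :: ('k ^ 'n) set. val_convex v X} CARD('n)"
  unfolding has_breadth_def
  using breadth_le_val_convex[OF assms] not_breadth_le_val_convex by blast

end
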